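(* Let $h>0$, $k\in\mathbb{N}$, $\beta>0$, $f(x)=hx^k$ and $\mathcal{B}(\alpha)=f(\alpha)+\sqrt2\beta\sqrt{1-\alpha^2}$. If $\beta<\beta_c(k,h)$, then every global maximizer $\hat\alpha$ of $\mathcal{B}$ on $(-1,1)$ satisfies $\mathcal{B}''(\hat\alpha)<0$.
   Context: $\beta_c(1,h)=\infty$, $\beta_c(2,h)=\sqrt2h$, and for $k\ge3$, $\beta_c(k,h)=\frac{h}{\sqrt2}\frac{k-1}{k-2}\left(1-\frac{1}{(k-1)^2}\right)^{k/2}$. *)

theory Defs
  imports "HOL-Analysis.Analysis"
begin

text \<open>Critical inverse temperature beta_c(k,h), with value infinity for k = 1.
  Only meaningful for k \<ge> 1; the value at k = 0 is an arbitrary placeholder.\<close>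
definition beta_c :: "nat \<Rightarrow> real \<Rightarrow> ereal" where
  "beta_c k h =
     (if k = 1 then \<infinity>
      else if k = 2 then ereal (sqrt 2 * h)
      else ereal (h / sqrt 2 * ((real k - 1) / (real k - 2)) *
                  (1 - 1 / (real k - 1)^2) powr (real k / 2)))"

definition fB :: "real \<Rightarrow> nat \<Rightarrow> real \<Rightarrow> real \<Rightarrow> real" where
  "fB h k \<beta> \<alpha> = h * \<alpha> ^ k + sqrt 2 * \<beta> * sqrt (1 - \<alpha>^2)"

end

theory Submission
  imports Defs
begin

text \<open>Write \<open>c = \<surd>2 \<beta>\<close> and \<open>s = \<surd>(1 - \<alpha>\<^sup>2)\<close>. At a stationary point \<open>\<alpha> \<noteq> 0\<close> the equation
  \<open>h k \<alpha>^(k-1) s = c \<alpha>\<close> eliminates \<open>h\<close>: the sign of \<open>\<B>''(\<alpha>)\<close> becomes that of \<open>(k - 1) s\<^sup>2 - 1\<close>,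
  and \<open>k s (\<B>(\<alpha>) - \<B>(0)) = c (1 - s) (1 - (k - 1) s)\<close>. So \<open>\<B>''(\<alpha>) \<ge> 0\<close> forces \<open>(k - 1) s > 1\<close>
  and hence \<open>\<B>(\<alpha>) < \<B>(0)\<close>, impossible at a global maximum. At \<open>\<alpha> = 0\<close> we have \<open>\<B>''(0) = -c\<close>
  unless \<open>k = 2\<close>; for \<open>k = 2\<close> the hypothesis \<open>\<beta> < \<surd>2 h\<close> is exactly what prevents \<open>0\<close> from
  being a global maximizer. In particular the hypothesis on \<open>\<beta>\<close> is only needed for \<open>k = 2\<close>.\<close>

lemma fB_has_real_derivative:
  assumes "a \<in> {-1<..<1}"
  shows "(fB h k \<beta> has_real_derivative
           h * real k * a ^ (k - 1) - sqrt 2 * \<beta> * a / sqrt (1 - a\<^sup>2)) (at a)"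
proof -
  have "1 - a\<^sup>2 > 0"
    using assms by (simp add: abs_square_less_1 abs_less_iff)
  then show ?thesis
    unfolding fB_def [abs_def]
    by (auto intro!: derivative_eq_intros simp: field_simps)
qed

lemma deriv2_fB:
  assumes "a \<in> {-1<..<1}"
  shows "deriv (deriv (fB h k \<beta>)) a =
           h * real k * (real k - 1) * a ^ (k - 2) - sqrt 2 * \<beta> / sqrt (1 - a\<^sup>2) ^ 3"
proof -
  have pos: "1 - a\<^sup>2 > 0"
    using assms by (simp add: abs_square_less_1 abs_less_iff)
  have deriv_eq: "deriv (fB h k \<beta>) x =
                    h * real k * x ^ (k - 1) - sqrt 2 * \<beta> * x / sqrt (1 - x\<^sup>2)"
    if "x \<in> {-1<..<1}" for x
    using fB_has_real_derivative [OF that] by (rule DERIV_imp_deriv)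
  have "((\<lambda>x. h * real k * x ^ (k - 1) - sqrt 2 * \<beta> * x / sqrt (1 - x\<^sup>2)) has_real_derivative
          h * real k * (real k - 1) * a ^ (k - 2) - sqrt 2 * \<beta> / sqrt (1 - a\<^sup>2) ^ 3) (at a)"
    using pos
    by (cases k) (auto intro!: derivative_eq_intros simp: field_simps power2_eq_square power3_eq_cube)
  then have "(deriv (fB h k \<beta>) has_real_derivative
               h * real k * (real k - 1) * a ^ (k - 2) - sqrt 2 * \<beta> / sqrt (1 - a\<^sup>2) ^ 3) (at a)"
    by (rule has_field_derivative_transform_within_open [where S = "{-1<..<1}"])
       (use assms deriv_eq in auto)
  then show ?thesis
    by (rule DERIV_imp_deriv)
qed

lemma fB_interior_max_stationary:
  assumes a: "a \<in> {-1<..<1}" and max: "\<forall>x\<in>{-1<..<1}. fB h k \<beta> x \<le> fB h k \<beta> a"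
  shows "h * real k * a ^ (k - 1) * sqrt (1 - a\<^sup>2) = sqrt 2 * \<beta> * a"
proof -
  have "h * real k * a ^ (k - 1) - sqrt 2 * \<beta> * a / sqrt (1 - a\<^sup>2) = 0"
  proof (rule DERIV_local_max [OF fB_has_real_derivative [OF a]])
    show "0 < min (1 - a) (1 + a)"
      using a by simp
    show "\<forall>y. \<bar>a - y\<bar> < min (1 - a) (1 + a) \<longrightarrow> fB h k \<beta> y \<le> fB h k \<beta> a"
      using max by (auto simp: abs_less_iff)
  qed
  moreover have "sqrt (1 - a\<^sup>2) > 0"
    using a by (simp add: abs_square_less_1 abs_less_iff)
  ultimately show ?thesis
    by (simp add: field_simps)
qed

lemma deriv2_fB_at_stationary:
  fixes a h \<beta> :: real and k :: nat
  defines "s \<equiv> sqrt (1 - a\<^sup>2)"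
  assumes a: "a \<in> {-1<..<1}"
    and stationary: "h * real k * a ^ (k - 1) * s = sqrt 2 * \<beta> * a"
  shows "a\<^sup>2 * s ^ 3 * deriv (deriv (fB h k \<beta>)) a = sqrt 2 * \<beta> * a\<^sup>2 * ((real k - 1) * s\<^sup>2 - 1)"
proof -
  have "s > 0"
    using a by (simp add: s_def abs_square_less_1 abs_less_iff)
  have shift: "h * real k * (real k - 1) * a ^ (k - 2) * a\<^sup>2 = (real k - 1) * a * (h * real k * a ^ (k - 1))"
  proof (cases "k \<ge> 2")
    case True
    then obtain m where "k = Suc (Suc m)"
      by (metis add_2_eq_Suc le_Suc_ex)
    then show ?thesis
      by (simp add: power2_eq_square)
  next
    case False
    then have "k = 0 \<or> k = 1"
      by auto
    then show ?thesis
      by auto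
  qed
  have "a\<^sup>2 * s ^ 3 * deriv (deriv (fB h k \<beta>)) a
          = s ^ 3 * (h * real k * (real k - 1) * a ^ (k - 2) * a\<^sup>2) - sqrt 2 * \<beta> * a\<^sup>2"
    using \<open>s > 0\<close> unfolding deriv2_fB [OF a] s_def [symmetric]
    by (simp add: algebra_simps)
  also have "\<dots> = (real k - 1) * a * s\<^sup>2 * (h * real k * a ^ (k - 1) * s) - sqrt 2 * \<beta> * a\<^sup>2"
    unfolding shift by (simp add: algebra_simps power2_eq_square power3_eq_cube)
  also have "\<dots> = sqrt 2 * \<beta> * a\<^sup>2 * ((real k - 1) * s\<^sup>2 - 1)"
    unfolding stationary by (simp add: algebra_simps power2_eq_square)
  finally show ?thesis .
qed

lemma fB_stationary_value:
  fixes a h \<beta> :: real and k :: nat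
  defines "s \<equiv> sqrt (1 - a\<^sup>2)"
  assumes "k \<ge> 1" and a: "a \<in> {-1<..<1}"
    and stationary: "h * real k * a ^ (k - 1) * s = sqrt 2 * \<beta> * a"
  shows "real k * s * (fB h k \<beta> a - fB h k \<beta> 0) = sqrt 2 * \<beta> * (1 - s) * (1 - (real k - 1) * s)"
proof -
  have s2: "s\<^sup>2 = 1 - a\<^sup>2"
    using a by (simp add: s_def abs_square_less_1 abs_less_iff less_imp_le)
  have "a ^ k = a * a ^ (k - 1)"
    using \<open>k \<ge> 1\<close> by (metis Suc_diff_le diff_Suc_1 power_Suc)
  then have "real k * s * (h * a ^ k) = a * (h * real k * a ^ (k - 1) * s)"
    by (simp add: algebra_simps)
  also have "\<dots> = sqrt 2 * \<beta> * (1 - s\<^sup>2)"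
    unfolding stationary s2 by (simp add: power2_eq_square)
  finally have value_term: "real k * s * (h * a ^ k) = sqrt 2 * \<beta> * (1 - s\<^sup>2)" .
  have "fB h k \<beta> a - fB h k \<beta> 0 = h * a ^ k + (sqrt 2 * \<beta> * s - sqrt 2 * \<beta>)"
    using \<open>k \<ge> 1\<close> by (simp add: fB_def s_def)
  then have "real k * s * (fB h k \<beta> a - fB h k \<beta> 0)
               = real k * s * (h * a ^ k) + real k * s * (sqrt 2 * \<beta> * s - sqrt 2 * \<beta>)"
    by (simp add: distrib_left)
  also have "\<dots> = sqrt 2 * \<beta> * (1 - s) * (1 - (real k - 1) * s)"
    unfolding value_term by (simp add: algebra_simps power2_eq_square)
  finally show ?thesis .
qed

lemma deriv2_fB_neg_at_stationary:
  assumes "k \<ge> 1" and "\<beta> > 0" and a: "a \<in> {-1<..<1}" "a \<noteq> 0"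
    and stationary: "h * real k * a ^ (k - 1) * sqrt (1 - a\<^sup>2) = sqrt 2 * \<beta> * a"
    and above_zero: "fB h k \<beta> 0 \<le> fB h k \<beta> a"
  shows "deriv (deriv (fB h k \<beta>)) a < 0"
proof (rule ccontr)
  define s where "s = sqrt (1 - a\<^sup>2)"
  have s: "0 < s" "s < 1"
    using a by (auto simp: s_def abs_square_less_1 abs_less_iff)
  have c: "sqrt 2 * \<beta> > 0"
    using \<open>\<beta> > 0\<close> by simp
  assume "\<not> deriv (deriv (fB h k \<beta>)) a < 0"
  then have "0 \<le> a\<^sup>2 * s ^ 3 * deriv (deriv (fB h k \<beta>)) a"
    using s by simp
  then have "0 \<le> sqrt 2 * \<beta> * a\<^sup>2 * ((real k - 1) * s\<^sup>2 - 1)"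
    using deriv2_fB_at_stationary [OF a(1) stationary] by (simp add: s_def)
  moreover have "0 < sqrt 2 * \<beta> * a\<^sup>2"
    using c a(2) by simp
  ultimately have "1 \<le> (real k - 1) * s\<^sup>2"
    by (simp add: zero_le_mult_iff)
  also have "\<dots> < (real k - 1) * s"
  proof (rule mult_strict_left_mono)
    show "s\<^sup>2 < s"
      using s by (simp add: power2_eq_square)
    show "0 < real k - 1"
      using \<open>k \<ge> 1\<close> \<open>1 \<le> (real k - 1) * s\<^sup>2\<close> by (cases "k = 1") auto
  qed
  finally have "sqrt 2 * \<beta> * (1 - s) * (1 - (real k - 1) * s) < 0"
    using s c by (simp add: mult_pos_neg)
  then have "real k * s * (fB h k \<beta> a - fB h k \<beta> 0) < 0"
    using fB_stationary_value [OF \<open>k \<ge> 1\<close> a(1) stationary] by (simp add: s_def)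
  with above_zero s show False
    by (simp add: mult_less_0_iff)
qed

lemma fB_2_zero_not_max:
  assumes "h > 0" and "\<beta> > 0" and "\<beta> < sqrt 2 * h"
  shows "\<exists>x\<in>{-1<..<1}. fB h 2 \<beta> 0 < fB h 2 \<beta> x"
proof
  define t where "t = sqrt 2 * \<beta> / (2 * h)"
  have c: "sqrt 2 * \<beta> = 2 * h * t"
    using \<open>h > 0\<close> by (simp add: t_def)
  have "sqrt 2 * \<beta> < sqrt 2 * (sqrt 2 * h)"
    using \<open>\<beta> < sqrt 2 * h\<close> by (intro mult_strict_left_mono) simp_all
  then have t: "0 < t" "t < 1"
    using assms by (simp_all add: t_def mult.assoc [symmetric])
  have "0 < 1 - t\<^sup>2" "1 - t\<^sup>2 < 1"
    using t by (simp_all add: power_less_one_iff)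
  then have "0 < sqrt (1 - t\<^sup>2)" "sqrt (1 - t\<^sup>2) < 1"
    by simp_all
  then show "sqrt (1 - t\<^sup>2) \<in> {-1<..<1}"
    unfolding greaterThanLessThan_iff by linarith
  have "sqrt (1 - t\<^sup>2) ^ 2 = 1 - t\<^sup>2"
    using t by (simp add: power_le_one)
  then have "fB h 2 \<beta> (sqrt (1 - t\<^sup>2)) = h * (1 - t\<^sup>2) + 2 * h * t * t"
    using t by (simp add: fB_def c)
  moreover have "fB h 2 \<beta> 0 = 2 * h * t"
    by (simp add: fB_def c)
  moreover have "0 < h * (1 - t)\<^sup>2"
    using t \<open>h > 0\<close> by simp
  ultimately show "fB h 2 \<beta> 0 < fB h 2 \<beta> (sqrt (1 - t\<^sup>2))"
    by (simp add: algebra_simps power2_eq_square)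
qed

theorem lemma7p1:
  fixes h \<beta> :: real and k :: nat
  assumes "h > 0" and "k \<ge> 1" and "\<beta> > 0"
    and "ereal \<beta> < beta_c k h"
  shows "\<forall>\<alpha>\<in>{-1<..<1}. (\<forall>x\<in>{-1<..<1}. fB h k \<beta> x \<le> fB h k \<beta> \<alpha>)
           \<longrightarrow> deriv (deriv (fB h k \<beta>)) \<alpha> < 0"
proof (intro ballI impI)
  fix a
  assume a: "a \<in> {-1<..<1}" and max: "\<forall>x\<in>{-1<..<1}. fB h k \<beta> x \<le> fB h k \<beta> a"
  show "deriv (deriv (fB h k \<beta>)) a < 0"
  proof (cases "a = 0")
    case True
    have "k \<noteq> 2"
    proof
      assume "k = 2"
      with assms(4) have "\<beta> < sqrt 2 * h"
        by (simp add: beta_c_def)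
      with fB_2_zero_not_max [OF assms(1,3)] max True \<open>k = 2\<close> show False
        by fastforce
    qed
    then have "real k * (real k - 1) * 0 ^ (k - 2) = 0"
      using assms(2) by (cases "k = 1") auto
    then have "deriv (deriv (fB h k \<beta>)) a = - sqrt 2 * \<beta>"
      unfolding deriv2_fB [OF a] using True by simp
    with assms(3) show ?thesis
      by simp
  next
    case False
    have "fB h k \<beta> 0 \<le> fB h k \<beta> a"
      using max by simp
    with False show ?thesis
      using deriv2_fB_neg_at_stationary assms(2,3) a fB_interior_max_stationary [OF a max]
      by blast
  qed
qed

end
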